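(* Let $(X_1,X_2,X_3)$ be nonnegative random variables with a common marginal survival function $\bar F$ and Farlie–Gumbel–Morgenstern survival copula $\hat C(u_1,u_2,u_3)=u_1u_2u_3[1+\theta(1-u_1)(1-u_2)(1-u_3)]$, $-1\le\theta\le1$. Let $t>0$ with $0<k:=\bar F(t)<1$, and define $\mathbf{X}_t=(X_1-t,X_2-t\mid X_1>t,X_2>t)$, $\mathbf{X}^{(3)}_t=(X_1-t,X_2-t\mid X_1>t,X_2>t,X_3\le t)$, $\mathbf{X}^*_t=(X_1-t,X_2-t\mid X_1>t,X_2>t,X_3>t)$. Then the joint survival functions of these three vectors are $\hat D(\bar F_t(x_1),\bar F_t(x_2))$ with $\bar F_t(x)=\bar F(t+x)/\bar F(t)$ and respective dual distortions $\hat D_t(u_1,u_2)=u_1u_2$, $\hat D^{(3)}_t(u_1,u_2)=u_1u_2\dfrac{1-\theta k(1-ku_1)(1-ku_2)}{1-\theta k(1-k)^2}$, $\hat D^{*}_t(u_1,u_2)=u_1u_2\dfrac{1+\theta(1-ku_1)(1-ku_2)(1-k)}{1+\theta(1-k)^3}$. Moreover $\hat D^*_t\le\hat D_t\le\hat D^{(3)}_t$ when $\theta\le0$ and $\hat D^*_t\ge\hat D_t\ge\hat D^{(3)}_t$ when $\theta\ge0$; consequently $\mathbf{X}^*_t\le_{uo}\mathbf{X}_t\le_{uo}\mathbf{X}^{(3)}_t$ for $\theta\le0$, and the reverse orderings hold for $\theta\ge0$.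
   Context: Upper orthant order: $\mathbf{X}\le_{uo}\mathbf{Y}$ iff $\Pr(\mathbf{X}>\mathbf{x})\le\Pr(\mathbf{Y}>\mathbf{x})$ for all $\mathbf{x}$ (componentwise). *)

theory Defs
  imports "HOL-Probability.Probability"
begin

definition fgm3 :: "real \<Rightarrow> real \<Rightarrow> real \<Rightarrow> real \<Rightarrow> real" where
  "fgm3 \<theta> u1 u2 u3 = u1 * u2 * u3 * (1 + \<theta> * (1 - u1) * (1 - u2) * (1 - u3))"

definition surv2 :: "'a measure \<Rightarrow> ('a \<Rightarrow> real) \<Rightarrow> ('a \<Rightarrow> real) \<Rightarrow> real \<Rightarrow> real \<Rightarrow> real" where
  "surv2 N Y1 Y2 x1 x2 = measure N {\<omega> \<in> space N. x1 < Y1 \<omega> \<and> x2 < Y2 \<omega>}"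

definition uo_le2 :: "'a measure \<Rightarrow> ('a \<Rightarrow> real) \<Rightarrow> ('a \<Rightarrow> real) \<Rightarrow>
    'b measure \<Rightarrow> ('b \<Rightarrow> real) \<Rightarrow> ('b \<Rightarrow> real) \<Rightarrow> bool" where
  "uo_le2 N Y1 Y2 P Z1 Z2 \<longleftrightarrow> (\<forall>x1 x2. surv2 N Y1 Y2 x1 x2 \<le> surv2 P Z1 Z2 x1 x2)"

text \<open>The three dual distortions (k = survival function at t).\<close>
definition Dt :: "real \<Rightarrow> real \<Rightarrow> real" where
  "Dt u1 u2 = u1 * u2"

definition D3t :: "real \<Rightarrow> real \<Rightarrow> real \<Rightarrow> real \<Rightarrow> real" where
  "D3t \<theta> k u1 u2 = u1 * u2 * (1 - \<theta> * k * (1 - k * u1) * (1 - k * u2)) / (1 - \<theta> * k * (1 - k)^2)"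

definition Dstart :: "real \<Rightarrow> real \<Rightarrow> real \<Rightarrow> real \<Rightarrow> real" where
  "Dstart \<theta> k u1 u2 = u1 * u2 * (1 + \<theta> * (1 - k * u1) * (1 - k * u2) * (1 - k)) / (1 + \<theta> * (1 - k)^3)"

end

theory Submission
  imports Defs
begin

text \<open>
  Conditioned on \<open>X1, X2 > t\<close>, the joint survival function at \<open>(t + x1, t + x2)\<close> is
  \<open>Fbar(t + x1) Fbar(t + x2)\<close> times a correction factor \<open>1 \<plusminus> \<theta> (1 - a)(1 - b) \<dots>\<close> coming
  from the FGM term, split according to whether \<open>X3 > t\<close> or \<open>X3 \<le> t\<close>; dividing by the
  probability of the conditioning event gives the dual distortions. Since \<open>1 - k u \<ge> 1 - k\<close>
  for \<open>u \<in> [0, 1]\<close>, each correction factor lies on one side of its value at \<open>u1 = u2 = 1\<close>,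
  which is the normalising constant, and the side is decided by the sign of \<open>\<theta>\<close>. All three
  residual survival functions are distortions of the same marginals, so these pointwise
  comparisons are exactly the upper orthant orders.
\<close>

section \<open>The dual distortions\<close>

lemma Dstart_ratio:
  assumes "k \<noteq> 0"
  shows "fgm3 \<theta> a b k / fgm3 \<theta> k k k = Dstart \<theta> k (a / k) (b / k)"
proof -
  define N D where "N = 1 + \<theta> * (1 - a) * (1 - b) * (1 - k)" and "D = 1 + \<theta> * (1 - k)^3"
  have "fgm3 \<theta> a b k / fgm3 \<theta> k k k = (k * (a * b * N)) / (k * (k * k * D))"
    unfolding fgm3_def N_def D_def by (simp add: power3_eq_cube algebra_simps)
  also have "\<dots> = a * b * N / (k * k * D)"
    using assms by simp
  also have "\<dots> = Dstart \<theta> k (a / k) (b / k)"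
    using assms unfolding Dstart_def N_def D_def by simp
  finally show ?thesis .
qed

lemma D3t_ratio:
  assumes "k \<noteq> 0" "k \<noteq> 1"
  shows "(a * b - fgm3 \<theta> a b k) / (k * k - fgm3 \<theta> k k k) = D3t \<theta> k (a / k) (b / k)"
proof -
  define N D where "N = 1 - \<theta> * k * (1 - a) * (1 - b)" and "D = 1 - \<theta> * k * (1 - k)^2"
  have "(a * b - fgm3 \<theta> a b k) / (k * k - fgm3 \<theta> k k k)
      = ((1 - k) * (a * b * N)) / ((1 - k) * (k * k * D))"
    unfolding fgm3_def N_def D_def by (simp add: power2_eq_square algebra_simps)
  also have "\<dots> = a * b * N / (k * k * D)"
    using assms by simp
  also have "\<dots> = D3t \<theta> k (a / k) (b / k)"
    using assms unfolding D3t_def N_def D_def by simp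
  finally show ?thesis .
qed

lemma Dstart_denom_pos:
  fixes \<theta> k :: real
  assumes "-1 \<le> \<theta>" "0 < k" "k \<le> 1"
  shows "0 < 1 + \<theta> * (1 - k)^3"
proof -
  have "(1 - k)^3 < 1" and c: "0 \<le> (1 - k)^3"
    using assms by (simp_all add: power_less_one_iff)
  moreover have "-1 * (1 - k)^3 \<le> \<theta> * (1 - k)^3"
    using mult_right_mono[OF assms(1) c] .
  ultimately show ?thesis by linarith
qed

lemma D3t_denom_pos:
  fixes \<theta> k :: real
  assumes "\<theta> \<le> 1" "0 \<le> k" "k \<le> 1"
  shows "0 < 1 - \<theta> * k * (1 - k)^2"
proof -
  have "k * (1 - k)^2 < 1"
  proof (cases "k = 1")
    case False
    have "k * (1 - k)^2 \<le> k * 1"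
      using assms by (intro mult_left_mono power_le_one) auto
    with False assms show ?thesis by linarith
  qed simp
  moreover have c: "0 \<le> k * (1 - k)^2"
    using assms by simp
  moreover have "\<theta> * (k * (1 - k)^2) \<le> 1 * (k * (1 - k)^2)"
    using mult_right_mono[OF assms(1) c] .
  ultimately show ?thesis by (simp add: mult.assoc)
qed

lemma mult_divide_le_self:
  fixes c N D :: real
  assumes "0 \<le> c" "0 < D" "N \<le> D"
  shows "c * N / D \<le> c"
  using assms mult_left_mono[of "N / D" 1 c] by simp

lemma le_mult_divide_self:
  fixes c N D :: real
  assumes "0 \<le> c" "0 < D" "D \<le> N"
  shows "c \<le> c * N / D"
  using assms mult_left_mono[of 1 "N / D" c] by simp

lemma one_minus_sq_le:
  fixes k u1 u2 :: real
  assumes "0 \<le> k" "k \<le> 1" "u1 \<in> {0..1}" "u2 \<in> {0..1}"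
  shows "(1 - k)^2 \<le> (1 - k * u1) * (1 - k * u2)"
proof -
  have "1 - k \<le> 1 - k * u1" "1 - k \<le> 1 - k * u2"
    using assms by (auto intro: mult_left_le)
  then show ?thesis
    using assms by (simp add: power2_eq_square mult_mono)
qed

lemma one_minus_cube_le:
  fixes k u1 u2 :: real
  assumes "0 \<le> k" "k \<le> 1" "u1 \<in> {0..1}" "u2 \<in> {0..1}"
  shows "(1 - k)^3 \<le> (1 - k * u1) * (1 - k * u2) * (1 - k)"
  using mult_right_mono[OF one_minus_sq_le[OF assms], of "1 - k"] assms(2)
  by (simp add: power2_eq_square power3_eq_cube)

lemma Dt_le_Dstart:
  assumes "0 \<le> \<theta>" "0 \<le> k" "k \<le> 1" "u1 \<in> {0..1}" "u2 \<in> {0..1}"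
  shows "Dt u1 u2 \<le> Dstart \<theta> k u1 u2"
proof -
  have "1 + \<theta> * (1 - k)^3 \<le> 1 + \<theta> * (1 - k * u1) * (1 - k * u2) * (1 - k)"
    using mult_left_mono[OF one_minus_cube_le[OF assms(2-)] assms(1)] by (simp add: mult.assoc)
  moreover have "0 < 1 + \<theta> * (1 - k)^3"
    using assms by (simp add: add_pos_nonneg)
  ultimately show ?thesis
    unfolding Dt_def Dstart_def using assms by (intro le_mult_divide_self) auto
qed

lemma Dstart_le_Dt:
  assumes "-1 \<le> \<theta>" "\<theta> \<le> 0" "0 < k" "k \<le> 1" "u1 \<in> {0..1}" "u2 \<in> {0..1}"
  shows "Dstart \<theta> k u1 u2 \<le> Dt u1 u2"
proof -
  have "1 + \<theta> * (1 - k * u1) * (1 - k * u2) * (1 - k) \<le> 1 + \<theta> * (1 - k)^3"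
    using mult_left_mono_neg[OF one_minus_cube_le[OF _ assms(4-)] assms(2)] assms(3)
    by (simp add: mult.assoc)
  then show ?thesis
    unfolding Dt_def Dstart_def using assms Dstart_denom_pos
    by (intro mult_divide_le_self) auto
qed

lemma D3t_le_Dt:
  assumes "0 \<le> \<theta>" "\<theta> \<le> 1" "0 \<le> k" "k \<le> 1" "u1 \<in> {0..1}" "u2 \<in> {0..1}"
  shows "D3t \<theta> k u1 u2 \<le> Dt u1 u2"
proof -
  have "k * (1 - k)^2 \<le> k * ((1 - k * u1) * (1 - k * u2))"
    using mult_left_mono[OF one_minus_sq_le[OF assms(3-)] assms(3)] .
  then have "1 - \<theta> * k * (1 - k * u1) * (1 - k * u2) \<le> 1 - \<theta> * k * (1 - k)^2"
    using mult_left_mono[OF _ assms(1)] by (simp add: mult.assoc)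
  then show ?thesis
    unfolding Dt_def D3t_def using assms D3t_denom_pos
    by (intro mult_divide_le_self) auto
qed

lemma Dt_le_D3t:
  assumes "\<theta> \<le> 0" "0 \<le> k" "k \<le> 1" "u1 \<in> {0..1}" "u2 \<in> {0..1}"
  shows "Dt u1 u2 \<le> D3t \<theta> k u1 u2"
proof -
  have "k * (1 - k)^2 \<le> k * ((1 - k * u1) * (1 - k * u2))"
    using mult_left_mono[OF one_minus_sq_le[OF assms(2-)] assms(2)] .
  then have "1 - \<theta> * k * (1 - k)^2 \<le> 1 - \<theta> * k * (1 - k * u1) * (1 - k * u2)"
    using mult_left_mono_neg[OF _ assms(1)] by (simp add: mult.assoc)
  moreover have "0 < 1 - \<theta> * k * (1 - k)^2"
    using D3t_denom_pos[of \<theta> k] assms by simp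
  ultimately show ?thesis
    unfolding Dt_def D3t_def using assms by (intro le_mult_divide_self) auto
qed

section \<open>Residual lifetimes under the FGM model\<close>

text \<open>Only the marginal of \<open>X1\<close> is assumed: together with the copula it determines the others.\<close>

locale fgm3_survival = prob_space M for M :: "'a measure" +
  fixes X1 X2 X3 :: "'a \<Rightarrow> real" and Fbar :: "real \<Rightarrow> real" and \<theta> :: real
  assumes measurable_X [measurable]:
      "X1 \<in> borel_measurable M" "X2 \<in> borel_measurable M" "X3 \<in> borel_measurable M"
    and nonneg_X: "\<And>\<omega>. \<omega> \<in> space M \<Longrightarrow> 0 \<le> X1 \<omega> \<and> 0 \<le> X2 \<omega> \<and> 0 \<le> X3 \<omega>"
    and survival_X1: "\<And>x. prob {\<omega>\<in>space M. x < X1 \<omega>} = Fbar x"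
    and survival_fgm3: "\<And>x1 x2 x3. prob {\<omega>\<in>space M. x1 < X1 \<omega> \<and> x2 < X2 \<omega> \<and> x3 < X3 \<omega>}
                          = fgm3 \<theta> (Fbar x1) (Fbar x2) (Fbar x3)"
begin

abbreviation both_exceed :: "real \<Rightarrow> 'a set" where
  "both_exceed t \<equiv> {\<omega>\<in>space M. t < X1 \<omega> \<and> t < X2 \<omega>}"

abbreviation third_fails :: "real \<Rightarrow> 'a set" where
  "third_fails t \<equiv> {\<omega>\<in>space M. t < X1 \<omega> \<and> t < X2 \<omega> \<and> X3 \<omega> \<le> t}"

abbreviation all_exceed :: "real \<Rightarrow> 'a set" where
  "all_exceed t \<equiv> {\<omega>\<in>space M. t < X1 \<omega> \<and> t < X2 \<omega> \<and> t < X3 \<omega>}"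

abbreviation residual_surv :: "'a set \<Rightarrow> real \<Rightarrow> real \<Rightarrow> real \<Rightarrow> real" where
  "residual_surv Z t \<equiv> surv2 (uniform_measure M Z) (\<lambda>\<omega>. X1 \<omega> - t) (\<lambda>\<omega>. X2 \<omega> - t)"

lemma Fbar_neg:
  assumes "x < 0"
  shows "Fbar x = 1"
proof -
  have "{\<omega>\<in>space M. x < X1 \<omega>} = space M"
    using nonneg_X assms by force
  then show ?thesis
    using survival_X1[of x] prob_space by simp
qed

lemma Fbar_nonneg: "0 \<le> Fbar x"
  using survival_X1[of x] measure_nonneg by metis

lemma Fbar_antimono:
  assumes "x \<le> y"
  shows "Fbar y \<le> Fbar x"
proof -
  have "prob {\<omega>\<in>space M. y < X1 \<omega>} \<le> prob {\<omega>\<in>space M. x < X1 \<omega>}"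
    using assms by (intro finite_measure_mono) auto
  then show ?thesis
    by (simp add: survival_X1)
qed

lemma excess_ratio_mem:
  assumes "0 < Fbar t"
  shows "Fbar (t + max x 0) / Fbar t \<in> {0..1}"
  using assms Fbar_nonneg Fbar_antimono[of t "t + max x 0"] by simp

text \<open>Letting \<open>x3 < 0\<close> in the copula shows that \<open>X1\<close> and \<open>X2\<close> are independent.\<close>

lemma survival_pair:
  "prob {\<omega>\<in>space M. x1 < X1 \<omega> \<and> x2 < X2 \<omega>} = Fbar x1 * Fbar x2"
proof -
  have "{\<omega>\<in>space M. x1 < X1 \<omega> \<and> x2 < X2 \<omega>}
      = {\<omega>\<in>space M. x1 < X1 \<omega> \<and> x2 < X2 \<omega> \<and> -1 < X3 \<omega>}"
    using nonneg_X by force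
  then show ?thesis
    using survival_fgm3[of x1 x2 "-1"] Fbar_neg[of "-1"] by (simp add: fgm3_def)
qed

lemma survival_pair_third_below:
  "prob {\<omega>\<in>space M. x1 < X1 \<omega> \<and> x2 < X2 \<omega> \<and> X3 \<omega> \<le> x3}
    = Fbar x1 * Fbar x2 - fgm3 \<theta> (Fbar x1) (Fbar x2) (Fbar x3)"
proof -
  have "{\<omega>\<in>space M. x1 < X1 \<omega> \<and> x2 < X2 \<omega> \<and> X3 \<omega> \<le> x3}
      = {\<omega>\<in>space M. x1 < X1 \<omega> \<and> x2 < X2 \<omega>}
        - {\<omega>\<in>space M. x1 < X1 \<omega> \<and> x2 < X2 \<omega> \<and> x3 < X3 \<omega>}"
    by auto
  also have "prob \<dots> = prob {\<omega>\<in>space M. x1 < X1 \<omega> \<and> x2 < X2 \<omega>}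
      - prob {\<omega>\<in>space M. x1 < X1 \<omega> \<and> x2 < X2 \<omega> \<and> x3 < X3 \<omega>}"
    by (rule finite_measure_Diff) auto
  finally show ?thesis
    by (simp add: survival_pair survival_fgm3)
qed

text \<open>Negative thresholds are vacuous for residual lifetimes, so they are replaced by \<open>0\<close>.\<close>

lemma residual_surv_eq:
  assumes "Z \<in> sets M" "prob Z \<noteq> 0" "Z \<subseteq> both_exceed t"
  shows "residual_surv Z t x1 x2
    = prob (Z \<inter> {\<omega>\<in>space M. t + max x1 0 < X1 \<omega> \<and> t + max x2 0 < X2 \<omega>}) / prob Z"
proof -
  let ?B = "{\<omega>\<in>space M. x1 < X1 \<omega> - t \<and> x2 < X2 \<omega> - t}"
  have "?B \<in> sets M"
    by measurable
  then have "measure (uniform_measure M Z) ?B = prob (Z \<inter> ?B) / prob Z"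
    using assms by (intro measure_uniform_measure) (auto simp: emeasure_eq_measure)
  moreover have "Z \<inter> ?B = Z \<inter> {\<omega>\<in>space M. t + max x1 0 < X1 \<omega> \<and> t + max x2 0 < X2 \<omega>}"
    using assms(3) by (auto simp: max_def)
  ultimately show ?thesis
    unfolding surv2_def by simp
qed

lemma residual_surv_both_exceed:
  assumes "0 < Fbar t"
  shows "residual_surv (both_exceed t) t x1 x2
    = Dt (Fbar (t + max x1 0) / Fbar t) (Fbar (t + max x2 0) / Fbar t)"
proof -
  have "both_exceed t \<inter> {\<omega>\<in>space M. t + max x1 0 < X1 \<omega> \<and> t + max x2 0 < X2 \<omega>}
      = {\<omega>\<in>space M. t + max x1 0 < X1 \<omega> \<and> t + max x2 0 < X2 \<omega>}"
    by auto
  moreover have "both_exceed t \<in> sets M"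
    by measurable
  ultimately show ?thesis
    using assms residual_surv_eq[of "both_exceed t" t]
    by (simp add: survival_pair Dt_def)
qed

lemma residual_surv_third_fails:
  assumes "\<theta> \<le> 1" "0 < Fbar t" "Fbar t < 1"
  shows "residual_surv (third_fails t) t x1 x2
    = D3t \<theta> (Fbar t) (Fbar (t + max x1 0) / Fbar t) (Fbar (t + max x2 0) / Fbar t)"
proof -
  let ?k = "Fbar t" and ?a = "Fbar (t + max x1 0)" and ?b = "Fbar (t + max x2 0)"
  have "prob (third_fails t) = ?k^2 * (1 - ?k) * (1 - \<theta> * ?k * (1 - ?k)^2)"
    using survival_pair_third_below[of t t t]
    by (simp add: fgm3_def power2_eq_square algebra_simps)
  moreover have "0 < 1 - \<theta> * ?k * (1 - ?k)^2"
    using assms by (intro D3t_denom_pos) auto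
  ultimately have nonzero: "prob (third_fails t) \<noteq> 0"
    using assms by simp
  have "third_fails t \<in> sets M"
    by measurable
  moreover have "third_fails t \<subseteq> both_exceed t"
    by auto
  ultimately have "residual_surv (third_fails t) t x1 x2
      = prob (third_fails t \<inter> {\<omega>\<in>space M. t + max x1 0 < X1 \<omega> \<and> t + max x2 0 < X2 \<omega>}) / prob (third_fails t)"
    by (rule residual_surv_eq[OF _ nonzero])
  also have "third_fails t \<inter> {\<omega>\<in>space M. t + max x1 0 < X1 \<omega> \<and> t + max x2 0 < X2 \<omega>}
      = {\<omega>\<in>space M. t + max x1 0 < X1 \<omega> \<and> t + max x2 0 < X2 \<omega> \<and> X3 \<omega> \<le> t}"
    by auto
  also have "prob \<dots> / prob (third_fails t) = (?a * ?b - fgm3 \<theta> ?a ?b ?k) / (?k * ?k - fgm3 \<theta> ?k ?k ?k)"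
    by (simp add: survival_pair_third_below)
  also have "\<dots> = D3t \<theta> ?k (?a / ?k) (?b / ?k)"
    using assms by (intro D3t_ratio) auto
  finally show ?thesis .
qed

lemma residual_surv_all_exceed:
  assumes "-1 \<le> \<theta>" "0 < Fbar t" "Fbar t < 1"
  shows "residual_surv (all_exceed t) t x1 x2
    = Dstart \<theta> (Fbar t) (Fbar (t + max x1 0) / Fbar t) (Fbar (t + max x2 0) / Fbar t)"
proof -
  let ?k = "Fbar t" and ?a = "Fbar (t + max x1 0)" and ?b = "Fbar (t + max x2 0)"
  have "prob (all_exceed t) = ?k^3 * (1 + \<theta> * (1 - ?k)^3)"
    using survival_fgm3[of t t t] by (simp add: fgm3_def power3_eq_cube algebra_simps)
  moreover have "0 < 1 + \<theta> * (1 - ?k)^3"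
    using assms by (intro Dstart_denom_pos) auto
  ultimately have nonzero: "prob (all_exceed t) \<noteq> 0"
    using assms by simp
  have "all_exceed t \<in> sets M"
    by measurable
  moreover have "all_exceed t \<subseteq> both_exceed t"
    by auto
  ultimately have "residual_surv (all_exceed t) t x1 x2
      = prob (all_exceed t \<inter> {\<omega>\<in>space M. t + max x1 0 < X1 \<omega> \<and> t + max x2 0 < X2 \<omega>}) / prob (all_exceed t)"
    by (rule residual_surv_eq[OF _ nonzero])
  also have "all_exceed t \<inter> {\<omega>\<in>space M. t + max x1 0 < X1 \<omega> \<and> t + max x2 0 < X2 \<omega>}
      = {\<omega>\<in>space M. t + max x1 0 < X1 \<omega> \<and> t + max x2 0 < X2 \<omega> \<and> t < X3 \<omega>}"
    by auto
  also have "prob \<dots> / prob (all_exceed t) = fgm3 \<theta> ?a ?b ?k / fgm3 \<theta> ?k ?k ?k"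
    by (simp add: survival_fgm3)
  also have "\<dots> = Dstart \<theta> ?k (?a / ?k) (?b / ?k)"
    using assms by (intro Dstart_ratio) auto
  finally show ?thesis .
qed

lemma uo_le2_all_exceed_both_exceed:
  assumes "-1 \<le> \<theta>" "\<theta> \<le> 0" "0 < Fbar t" "Fbar t < 1"
  shows "uo_le2 (uniform_measure M (all_exceed t)) (\<lambda>\<omega>. X1 \<omega> - t) (\<lambda>\<omega>. X2 \<omega> - t)
                (uniform_measure M (both_exceed t)) (\<lambda>\<omega>. X1 \<omega> - t) (\<lambda>\<omega>. X2 \<omega> - t)"
  unfolding uo_le2_def
proof (intro allI)
  fix x1 x2
  show "residual_surv (all_exceed t) t x1 x2 \<le> residual_surv (both_exceed t) t x1 x2"
    unfolding residual_surv_all_exceed[OF assms(1,3,4)] residual_surv_both_exceed[OF assms(3)]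
    using assms by (intro Dstart_le_Dt excess_ratio_mem) auto
qed

lemma uo_le2_both_exceed_third_fails:
  assumes "\<theta> \<le> 0" "0 < Fbar t" "Fbar t < 1"
  shows "uo_le2 (uniform_measure M (both_exceed t)) (\<lambda>\<omega>. X1 \<omega> - t) (\<lambda>\<omega>. X2 \<omega> - t)
                (uniform_measure M (third_fails t)) (\<lambda>\<omega>. X1 \<omega> - t) (\<lambda>\<omega>. X2 \<omega> - t)"
  unfolding uo_le2_def
proof (intro allI)
  fix x1 x2
  have theta_le_1: "\<theta> \<le> 1"
    using assms(1) by simp
  show "residual_surv (both_exceed t) t x1 x2 \<le> residual_surv (third_fails t) t x1 x2"
    unfolding residual_surv_both_exceed[OF assms(2)] residual_surv_third_fails[OF theta_le_1 assms(2,3)]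
    using assms by (intro Dt_le_D3t excess_ratio_mem) auto
qed

lemma uo_le2_both_exceed_all_exceed:
  assumes "0 \<le> \<theta>" "0 < Fbar t" "Fbar t < 1"
  shows "uo_le2 (uniform_measure M (both_exceed t)) (\<lambda>\<omega>. X1 \<omega> - t) (\<lambda>\<omega>. X2 \<omega> - t)
                (uniform_measure M (all_exceed t)) (\<lambda>\<omega>. X1 \<omega> - t) (\<lambda>\<omega>. X2 \<omega> - t)"
  unfolding uo_le2_def
proof (intro allI)
  fix x1 x2
  have theta_ge_minus_1: "-1 \<le> \<theta>"
    using assms(1) by simp
  show "residual_surv (both_exceed t) t x1 x2 \<le> residual_surv (all_exceed t) t x1 x2"
    unfolding residual_surv_both_exceed[OF assms(2)] residual_surv_all_exceed[OF theta_ge_minus_1 assms(2,3)]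
    using assms by (intro Dt_le_Dstart excess_ratio_mem) auto
qed

lemma uo_le2_third_fails_both_exceed:
  assumes "0 \<le> \<theta>" "\<theta> \<le> 1" "0 < Fbar t" "Fbar t < 1"
  shows "uo_le2 (uniform_measure M (third_fails t)) (\<lambda>\<omega>. X1 \<omega> - t) (\<lambda>\<omega>. X2 \<omega> - t)
                (uniform_measure M (both_exceed t)) (\<lambda>\<omega>. X1 \<omega> - t) (\<lambda>\<omega>. X2 \<omega> - t)"
  unfolding uo_le2_def
proof (intro allI)
  fix x1 x2
  show "residual_surv (third_fails t) t x1 x2 \<le> residual_surv (both_exceed t) t x1 x2"
    unfolding residual_surv_third_fails[OF assms(2-4)] residual_surv_both_exceed[OF assms(3)]
    using assms by (intro D3t_le_Dt excess_ratio_mem) auto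
qed

end

theorem mainTheorem12:
  fixes M :: "'a measure" and X1 X2 X3 :: "'a \<Rightarrow> real"
    and Fbar :: "real \<Rightarrow> real" and \<theta> t :: real
  assumes "prob_space M"
    and meas: "X1 \<in> borel_measurable M" "X2 \<in> borel_measurable M" "X3 \<in> borel_measurable M"
    and nonneg: "\<forall>\<omega>\<in>space M. 0 \<le> X1 \<omega> \<and> 0 \<le> X2 \<omega> \<and> 0 \<le> X3 \<omega>"
    and marg: "\<forall>x. measure M {\<omega>\<in>space M. x < X1 \<omega>} = Fbar x
                 \<and> measure M {\<omega>\<in>space M. x < X2 \<omega>} = Fbar x
                 \<and> measure M {\<omega>\<in>space M. x < X3 \<omega>} = Fbar x"
    and copula: "\<forall>x1 x2 x3. measure M {\<omega>\<in>space M. x1 < X1 \<omega> \<and> x2 < X2 \<omega> \<and> x3 < X3 \<omega>}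
                   = fgm3 \<theta> (Fbar x1) (Fbar x2) (Fbar x3)"
    and theta: "-1 \<le> \<theta>" "\<theta> \<le> 1"
    and tpos: "0 < t"
    and k: "0 < Fbar t" "Fbar t < 1"
  defines "A \<equiv> {\<omega>\<in>space M. t < X1 \<omega> \<and> t < X2 \<omega>}"
    and "A3 \<equiv> {\<omega>\<in>space M. t < X1 \<omega> \<and> t < X2 \<omega> \<and> X3 \<omega> \<le> t}"
    and "As \<equiv> {\<omega>\<in>space M. t < X1 \<omega> \<and> t < X2 \<omega> \<and> t < X3 \<omega>}"
    and "k \<equiv> Fbar t"
    and "Y1 \<equiv> (\<lambda>\<omega>. X1 \<omega> - t)"
    and "Y2 \<equiv> (\<lambda>\<omega>. X2 \<omega> - t)"
  shows
    "(\<forall>x1\<ge>0. \<forall>x2\<ge>0.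
        surv2 (uniform_measure M A) Y1 Y2 x1 x2 = Dt (Fbar (t + x1) / k) (Fbar (t + x2) / k)
      \<and> surv2 (uniform_measure M A3) Y1 Y2 x1 x2 = D3t \<theta> k (Fbar (t + x1) / k) (Fbar (t + x2) / k)
      \<and> surv2 (uniform_measure M As) Y1 Y2 x1 x2 = Dstart \<theta> k (Fbar (t + x1) / k) (Fbar (t + x2) / k))
   \<and> (\<theta> \<le> 0 \<longrightarrow> (\<forall>u1\<in>{0..1}. \<forall>u2\<in>{0..1}.
        Dstart \<theta> k u1 u2 \<le> Dt u1 u2 \<and> Dt u1 u2 \<le> D3t \<theta> k u1 u2))
   \<and> (0 \<le> \<theta> \<longrightarrow> (\<forall>u1\<in>{0..1}. \<forall>u2\<in>{0..1}.
        Dstart \<theta> k u1 u2 \<ge> Dt u1 u2 \<and> Dt u1 u2 \<ge> D3t \<theta> k u1 u2))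
   \<and> (\<theta> \<le> 0 \<longrightarrow> uo_le2 (uniform_measure M As) Y1 Y2 (uniform_measure M A) Y1 Y2
                 \<and> uo_le2 (uniform_measure M A) Y1 Y2 (uniform_measure M A3) Y1 Y2)
   \<and> (0 \<le> \<theta> \<longrightarrow> uo_le2 (uniform_measure M A) Y1 Y2 (uniform_measure M As) Y1 Y2
                 \<and> uo_le2 (uniform_measure M A3) Y1 Y2 (uniform_measure M A) Y1 Y2)"
proof -
  interpret fgm3_survival M X1 X2 X3 Fbar \<theta>
    using assms(1) meas nonneg marg copula
    by (simp add: fgm3_survival_def fgm3_survival_axioms_def)
  note distortions = residual_surv_both_exceed residual_surv_third_fails residual_surv_all_exceed
  note comparisons = Dstart_le_Dt Dt_le_D3t Dt_le_Dstart D3t_le_Dt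
  note orders = uo_le2_all_exceed_both_exceed uo_le2_both_exceed_third_fails
    uo_le2_both_exceed_all_exceed uo_le2_third_fails_both_exceed
  show ?thesis
    unfolding A_def A3_def As_def Y1_def Y2_def k_def
    using theta k by (auto simp: distortions orders intro!: comparisons)
qed

end
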